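(* Let $\Gamma$ be a connected, undirected graph without loops on $n$ nodes with Laplacian $\mathbf L=\mathbf K-\mathbf A$, and let $\phi_1,\dots,\phi_n$ be an orthonormal basis of eigenvectors of $\mathbf L$ with $\mathbf L\phi_i=\mu_i\phi_i$. Let $$\mathbf G=\begin{bmatrix}\mathbf 0&\mathbf I\\-\mathbf I&-\mathbf L\end{bmatrix},\qquad \mathbf U=\mathbf G(\mathbf G^T\mathbf G)^{-1/2},$$ and set $\lambda_i^{P+}=\tfrac12\big[\sqrt{\mu_i^2+4}+\mu_i\big]$. Then $$\mathbf U=\begin{bmatrix}\mathcal A&\mathcal B\\-\mathcal B&\mathcal A\end{bmatrix},\qquad \mathcal A=\sum_{i=1}^n\frac{1-(\lambda_i^{P+})^2}{1+(\lambda_i^{P+})^2}\phi_i\phi_i^T,\quad \mathcal B=\sum_{i=1}^n\frac{2\lambda_i^{P+}}{1+(\lambda_i^{P+})^2}\phi_i\phi_i^T.$$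
   Context: $\mathbf A$ is the adjacency matrix, $\mathbf K$ the diagonal degree matrix, $\mathbf I,\mathbf 0$ the $n\times n$ identity and zero matrices; $(\mathbf G^T\mathbf G)^{-1/2}$ is the inverse of the positive definite square root of $\mathbf G^T\mathbf G$, so $\mathbf U$ is the orthogonal factor in the polar decomposition of $\mathbf G$. *)

theory Defs
  imports "Jordan_Normal_Form.Matrix"
begin

definition adjacency_matrix :: "nat \<Rightarrow> real mat \<Rightarrow> bool" where
  "adjacency_matrix n A \<longleftrightarrow> A \<in> carrier_mat n n \<and>
     (\<forall>i<n. \<forall>j<n. A $$ (i,j) \<in> {0,1} \<and> A $$ (i,j) = A $$ (j,i)) \<and>
     (\<forall>i<n. A $$ (i,i) = 0)"

definition graph_connected :: "nat \<Rightarrow> real mat \<Rightarrow> bool" where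
  "graph_connected n A \<longleftrightarrow>
     (\<forall>i<n. \<forall>j<n. (i,j) \<in> {(a,b). a < n \<and> b < n \<and> A $$ (a,b) = 1}\<^sup>*)"

definition degree_matrix :: "nat \<Rightarrow> real mat \<Rightarrow> real mat" where
  "degree_matrix n A = mat_diag n (\<lambda>i. \<Sum>k<n. A $$ (i,k))"

definition laplacian :: "nat \<Rightarrow> real mat \<Rightarrow> real mat" where
  "laplacian n A = degree_matrix n A - A"

definition mat_inv :: "real mat \<Rightarrow> real mat" where
  "mat_inv M = (THE B. B \<in> carrier_mat (dim_row M) (dim_row M) \<and> M * B = 1\<^sub>m (dim_row M)
                  \<and> B * M = 1\<^sub>m (dim_row M))"

definition pos_def_mat :: "nat \<Rightarrow> real mat \<Rightarrow> bool" where
  "pos_def_mat n S \<longleftrightarrow> S \<in> carrier_mat n n \<and> transpose_mat S = S \<and>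
     (\<forall>x \<in> carrier_vec n. x \<noteq> 0\<^sub>v n \<longrightarrow> x \<bullet> (S *\<^sub>v x) > 0)"

definition pd_sqrt :: "real mat \<Rightarrow> real mat" where
  "pd_sqrt M = (THE S. pos_def_mat (dim_row M) S \<and> S * S = M)"

text \<open>Entries of the matrix  sum_{i<n} c_i phi_i phi_i^T.\<close>
definition outer_sum :: "nat \<Rightarrow> (nat \<Rightarrow> real) \<Rightarrow> (nat \<Rightarrow> real vec) \<Rightarrow> real mat" where
  "outer_sum n c phi = mat n n (\<lambda>(j,k). \<Sum>i<n. c i * ((phi i) $ j * (phi i) $ k))"

end

theory Submission
  imports Defs "Jordan_Normal_Form.Determinant"
begin

text \<open>In the orthonormal eigenbasis of \<open>L\<close> all matrices involved decompose into \<open>2 \<times> 2\<close> blocks,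
one per eigenvalue \<open>\<mu>\<close>, and \<open>G\<close> acts on the block of \<open>\<mu>\<close> as \<open>[[0, 1], [-1, -\<mu>]]\<close>.
If \<open>\<lambda> > 0\<close> is the root of \<open>\<lambda>\<^sup>2 = \<mu> \<lambda> + 1\<close>, then \<open>a = (1 - \<lambda>\<^sup>2) / (1 + \<lambda>\<^sup>2)\<close> and
\<open>b = 2 \<lambda> / (1 + \<lambda>\<^sup>2)\<close> satisfy \<open>a\<^sup>2 + b\<^sup>2 = 1\<close>, \<open>b > 0\<close> and \<open>2 a + b \<mu> = 0\<close>, and the block
factors as the rotation \<open>[[a, b], [-b, a]]\<close> times \<open>S = [[b, -a], [-a, b - a \<mu>]]\<close>. This \<open>S\<close>
has determinant 1 and a Cholesky factor, so it is positive definite; by uniqueness of positive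
definite square roots it is the square root of \<open>G\<^sup>T G\<close>, and \<open>U = G S\<^sup>-\<^sup>1\<close> is the rotation.\<close>

definition trace :: "'a :: comm_monoid_add mat \<Rightarrow> 'a" where
  "trace A = (\<Sum>i<dim_row A. A $$ (i,i))"

lemma trace_mult_comm:
  fixes A :: "'a :: comm_semiring_0 mat"
  assumes "A \<in> carrier_mat n m" "B \<in> carrier_mat m n"
  shows "trace (A * B) = trace (B * A)"
proof -
  have "trace (A * B) = (\<Sum>i<n. \<Sum>j<m. A $$ (i,j) * B $$ (j,i))"
    using assms by (simp add: trace_def scalar_prod_def lessThan_atLeast0)
  also have "\<dots> = (\<Sum>j<m. \<Sum>i<n. B $$ (j,i) * A $$ (i,j))"
    by (subst sum.swap) (simp add: mult.commute)
  also have "\<dots> = trace (B * A)"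
    using assms by (simp add: trace_def scalar_prod_def lessThan_atLeast0)
  finally show ?thesis .
qed

lemma pos_def_mat_trace_congruence:
  assumes S: "pos_def_mat n S" and D: "D \<in> carrier_mat n n"
  shows "trace (transpose_mat D * S * D) \<ge> 0"
    and "D \<noteq> 0\<^sub>m n n \<Longrightarrow> trace (transpose_mat D * S * D) > 0"
proof -
  have Sc: "S \<in> carrier_mat n n" using S by (simp add: pos_def_mat_def)
  have col: "(transpose_mat D * S * D) $$ (k,k) = col D k \<bullet> (S *\<^sub>v col D k)" if "k < n" for k
    using that D Sc
    by (simp add: assoc_mult_mat[of _ n n _ n _ n] mult_mat_vec_def)
  have sum: "trace (transpose_mat D * S * D) = (\<Sum>k<n. col D k \<bullet> (S *\<^sub>v col D k))"
    using D Sc col by (simp add: trace_def)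
  have ge: "col D k \<bullet> (S *\<^sub>v col D k) \<ge> 0" if "k < n" for k
  proof (cases "col D k = 0\<^sub>v n")
    case True
    then show ?thesis using Sc by simp
  next
    case False
    then show ?thesis using S D that unfolding pos_def_mat_def by (simp add: less_imp_le)
  qed
  show "trace (transpose_mat D * S * D) \<ge> 0"
    unfolding sum by (rule sum_nonneg) (use ge in auto)
  assume "D \<noteq> 0\<^sub>m n n"
  then obtain k where k: "k < n" "col D k \<noteq> 0\<^sub>v n"
  proof -
    have "\<exists>i<n. \<exists>k<n. D $$ (i,k) \<noteq> 0"
    proof (rule ccontr)
      assume "\<not> ?thesis"
      then have "D = 0\<^sub>m n n" using D by (auto intro!: eq_matI)
      with \<open>D \<noteq> 0\<^sub>m n n\<close> show False ..
    qed
    then show ?thesis using that D by (metis carrier_matD index_col index_zero_vec(1))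
  qed
  have "col D k \<bullet> (S *\<^sub>v col D k) > 0"
    using S D k unfolding pos_def_mat_def by auto
  with ge k show "trace (transpose_mat D * S * D) > 0"
    unfolding sum by (intro sum_pos2[of "{..<n}" k]) auto
qed

lemma trace_add:
  assumes "A \<in> carrier_mat n n" "B \<in> carrier_mat n n"
  shows "trace (A + B) = trace A + trace B"
  using assms by (simp add: trace_def sum.distrib)

lemma pos_def_mat_sqrt_unique:
  assumes S: "pos_def_mat n S" and T: "pos_def_mat n T" and ST: "S * S = T * T"
  shows "S = T"
proof -
  have Sc: "S \<in> carrier_mat n n" and Tc: "T \<in> carrier_mat n n"
    and Ss: "transpose_mat S = S" and Ts: "transpose_mat T = T"
    using S T by (auto simp: pos_def_mat_def)
  define D where "D = S - T"
  have Dc: "D \<in> carrier_mat n n" using Sc Tc by (simp add: D_def minus_carrier_mat)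
  have Ds: "transpose_mat D = D"
    using Sc Tc Ss Ts unfolding D_def by (metis transpose_minus)
  txt \<open>\<open>D\<close> solves \<open>S D + D T = 0\<close>; multiplying by \<open>D\<close> and taking traces gives
    \<open>tr (D\<^sup>T S D) + tr (D\<^sup>T T D) = 0\<close>, a sum of nonnegative terms that vanishes only if \<open>D = 0\<close>.\<close>
  have "S * D + D * T = S * S - T * T"
    using Sc Tc unfolding D_def
    by (simp add: mult_minus_distrib_mat[of _ n n] minus_mult_distrib_mat[of _ n n])
      (intro eq_matI; simp)
  then have sylvester: "S * D + D * T = 0\<^sub>m n n"
    using ST Tc by simp
  have "trace (D * T * D) = trace (D * (D * T))"
    using Tc Dc by (intro trace_mult_comm) auto
  then have "trace (transpose_mat D * S * D) + trace (transpose_mat D * T * D)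
      = trace (D * (S * D)) + trace (D * (D * T))"
    using Sc Dc Ds by (simp add: assoc_mult_mat[of _ n n _ n _ n])
  also have "\<dots> = trace (D * (S * D + D * T))"
    using Sc Tc Dc by (subst mult_add_distrib_mat[of _ n n]) (auto intro!: trace_add[symmetric])
  also have "\<dots> = 0"
    using Dc by (simp add: sylvester trace_def)
  finally have "trace (transpose_mat D * S * D) = 0"
    using pos_def_mat_trace_congruence(1)[OF S Dc] pos_def_mat_trace_congruence(1)[OF T Dc] by linarith
  then have "D = 0\<^sub>m n n"
    using pos_def_mat_trace_congruence(2)[OF S Dc] by fastforce
  show "S = T"
  proof (rule eq_matI)
    fix i j assume "i < dim_row T" "j < dim_col T"
    then have "(S - T) $$ (i,j) = 0"
      using \<open>D = 0\<^sub>m n n\<close> Tc unfolding D_def by simp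
    then show "S $$ (i,j) = T $$ (i,j)"
      using Sc Tc \<open>i < dim_row T\<close> \<open>j < dim_col T\<close> by simp
  qed (use Sc Tc in auto)
qed

lemma scalar_prod_self_pos:
  fixes v :: "real vec"
  assumes "v \<in> carrier_vec n" "v \<noteq> 0\<^sub>v n"
  shows "v \<bullet> v > 0"
proof -
  have "v \<bullet>c v = v \<bullet> v" by simp
  moreover have "v \<bullet>c v \<noteq> 0" using conjugate_square_eq_0_vec[OF assms(1)] assms(2) by blast
  moreover have "v \<bullet>c v \<ge> 0" by (rule conjugate_square_ge_0_vec)
  ultimately show ?thesis by linarith
qed

lemma pos_def_mat_gram:
  fixes R :: "real mat"
  assumes R: "R \<in> carrier_mat n n" and R': "R' \<in> carrier_mat n n" "R' * R = 1\<^sub>m n"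
  shows "pos_def_mat n (transpose_mat R * R)"
  unfolding pos_def_mat_def
proof (intro conjI ballI impI)
  show "transpose_mat R * R \<in> carrier_mat n n" using R by simp
  show "transpose_mat (transpose_mat R * R) = transpose_mat R * R"
    using R by (simp add: transpose_mult[of _ n n])
  fix x :: "real vec" assume x: "x \<in> carrier_vec n" and "x \<noteq> 0\<^sub>v n"
  have "R *\<^sub>v x \<noteq> 0\<^sub>v n"
  proof
    assume "R *\<^sub>v x = 0\<^sub>v n"
    have "x = (R' * R) *\<^sub>v x"
      using R' x by simp
    also have "\<dots> = R' *\<^sub>v (R *\<^sub>v x)"
      using R'(1) R x by (rule assoc_mult_mat_vec)
    also have "\<dots> = 0\<^sub>v n"
      using \<open>R *\<^sub>v x = 0\<^sub>v n\<close> R' by (intro eq_vecI) auto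
    finally show False using \<open>x \<noteq> 0\<^sub>v n\<close> by contradiction
  qed
  then have "(R *\<^sub>v x) \<bullet> (R *\<^sub>v x) > 0"
    using R x by (intro scalar_prod_self_pos) auto
  also have "(R *\<^sub>v x) \<bullet> (R *\<^sub>v x) = (transpose_mat R *\<^sub>v (R *\<^sub>v x)) \<bullet> x"
    using R x by (simp add: transpose_vec_mult_scalar[of _ n n])
  also have "\<dots> = x \<bullet> ((transpose_mat R * R) *\<^sub>v x)"
    using R x by (subst comm_scalar_prod[of _ n]) auto
  finally show "x \<bullet> ((transpose_mat R * R) *\<^sub>v x) > 0" .
qed

lemma mat_inv_eqI:
  assumes S: "S \<in> carrier_mat n n" and V: "V \<in> carrier_mat n n" and SV: "S * V = 1\<^sub>m n"
  shows "mat_inv S = V"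
  unfolding mat_inv_def
proof (rule the_equality)
  have "V * S = 1\<^sub>m n" using mat_mult_left_right_inverse[OF S V SV] .
  then show "V \<in> carrier_mat (dim_row S) (dim_row S) \<and> S * V = 1\<^sub>m (dim_row S) \<and> V * S = 1\<^sub>m (dim_row S)"
    using S V SV by simp
  fix B assume "B \<in> carrier_mat (dim_row S) (dim_row S) \<and> S * B = 1\<^sub>m (dim_row S) \<and> B * S = 1\<^sub>m (dim_row S)"
  then have B: "B \<in> carrier_mat n n" and BS: "B * S = 1\<^sub>m n" using S by auto
  have "B = B * (S * V)" using B SV by simp
  also have "\<dots> = V" using B S V BS by (simp add: assoc_mult_mat[of _ n n _ n _ n, symmetric])
  finally show "B = V" .
qed

lemma pd_sqrt_eqI:
  assumes M: "M \<in> carrier_mat n n" and S: "pos_def_mat n S" and SS: "S * S = M"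
  shows "pd_sqrt M = S"
  unfolding pd_sqrt_def
proof (rule the_equality)
  show "pos_def_mat (dim_row M) S \<and> S * S = M" using M S SS by simp
  fix T assume "pos_def_mat (dim_row M) T \<and> T * T = M"
  then show "T = S" using M SS pos_def_mat_sqrt_unique[OF _ S] by simp
qed

lemma polar_factor_eqI:
  assumes G: "G \<in> carrier_mat n n" and S: "pos_def_mat n S" and GG: "transpose_mat G * G = S * S"
    and V: "V \<in> carrier_mat n n" and SV: "S * V = 1\<^sub>m n"
  shows "G * mat_inv (pd_sqrt (transpose_mat G * G)) = G * V"
proof -
  have "pd_sqrt (transpose_mat G * G) = S"
    using G S GG by (intro pd_sqrt_eqI) (auto simp: pos_def_mat_def)
  moreover have "mat_inv S = V"
    using S V SV by (intro mat_inv_eqI) (auto simp: pos_def_mat_def)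
  ultimately show ?thesis by simp
qed

lemma quadratic_root_pos:
  fixes m :: real
  shows "(sqrt (m\<^sup>2 + 4) + m) / 2 > 0"
proof -
  have "\<bar>m\<bar> < sqrt (m\<^sup>2 + 4)"
    by (rule real_less_rsqrt) (simp add: power2_eq_square)
  then have "sqrt (m\<^sup>2 + 4) + m > 0" using abs_ge_minus_self[of m] by linarith
  then show ?thesis by simp
qed

lemma quadratic_root_eq:
  fixes m :: real
  shows "((sqrt (m\<^sup>2 + 4) + m) / 2)\<^sup>2 = m * ((sqrt (m\<^sup>2 + 4) + m) / 2) + 1"
proof -
  have "(sqrt (m\<^sup>2 + 4))\<^sup>2 = m\<^sup>2 + 4" by simp
  then show ?thesis by (simp add: power2_eq_square field_simps)
qed

lemma unit_circle_param_coeffs: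
  fixes l m :: real
  assumes l: "l > 0" and root: "l\<^sup>2 = m * l + 1"
  defines "a \<equiv> (1 - l\<^sup>2) / (1 + l\<^sup>2)" and "b \<equiv> 2 * l / (1 + l\<^sup>2)"
  shows "b > 0" and "a\<^sup>2 + b\<^sup>2 = 1" and "2 * a + b * m = 0"
proof -
  have d: "1 + l\<^sup>2 > 0" by (simp add: add_pos_nonneg)
  show "b > 0" unfolding b_def using l d by simp
  have "(1 - l\<^sup>2)\<^sup>2 + (2 * l)\<^sup>2 = (1 + l\<^sup>2)\<^sup>2" by (simp add: power2_eq_square algebra_simps)
  then show "a\<^sup>2 + b\<^sup>2 = 1" unfolding a_def b_def using d
    by (simp add: power_divide add_divide_distrib[symmetric])
  show "2 * a + b * m = 0" unfolding a_def b_def using d root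
    by (simp add: field_simps power2_eq_square)
qed

locale orthonormal_basis =
  fixes n :: nat and phi :: "nat \<Rightarrow> real vec"
  assumes basis_carrier: "i < n \<Longrightarrow> phi i \<in> carrier_vec n"
    and orthonormal: "i < n \<Longrightarrow> j < n \<Longrightarrow> phi i \<bullet> phi j = (if i = j then 1 else 0)"
begin

abbreviation \<Phi> :: "(nat \<Rightarrow> real) \<Rightarrow> real mat" where
  "\<Phi> f \<equiv> outer_sum n f phi"

lemma outer_sum_carrier [simp]:
  "\<Phi> f \<in> carrier_mat n n" "dim_row (\<Phi> f) = n" "dim_col (\<Phi> f) = n"
  by (simp_all add: outer_sum_def)

definition basis_mat :: "real mat" where
  "basis_mat = mat n n (\<lambda>(j, i). phi i $ j)"

lemma dim_basis_vec [simp]: "i < n \<Longrightarrow> dim_vec (phi i) = n"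
  by (rule carrier_vecD[OF basis_carrier])

lemma basis_mat_carrier [simp]:
  "basis_mat \<in> carrier_mat n n" "dim_row basis_mat = n" "dim_col basis_mat = n"
  by (simp_all add: basis_mat_def)

lemma col_basis_mat: "i < n \<Longrightarrow> col basis_mat i = phi i"
  by (intro eq_vecI) (auto simp: basis_mat_def)

lemma transpose_basis_mat_mult: "transpose_mat basis_mat * basis_mat = 1\<^sub>m n"
  by (intro eq_matI) (simp_all add: col_basis_mat orthonormal)

lemma basis_mat_mult_transpose: "basis_mat * transpose_mat basis_mat = 1\<^sub>m n"
  using mat_mult_left_right_inverse[OF _ _ transpose_basis_mat_mult] by simp

lemma outer_sum_eq: "\<Phi> f = basis_mat * mat_diag n f * transpose_mat basis_mat"
proof -
  have scaled_cols: "basis_mat * mat_diag n f = mat n n (\<lambda>(j, i). phi i $ j * f i)"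
    by (intro eq_matI) (simp_all add: mat_diag_mult_right[of _ n] basis_mat_def)
  show ?thesis
  proof (rule eq_matI)
    fix j k assume "j < dim_row (basis_mat * mat_diag n f * transpose_mat basis_mat)"
      "k < dim_col (basis_mat * mat_diag n f * transpose_mat basis_mat)"
    then have jk: "j < n" "k < n" by simp_all
    show "\<Phi> f $$ (j, k) = (basis_mat * mat_diag n f * transpose_mat basis_mat) $$ (j, k)"
      using jk scaled_cols
      by (simp add: outer_sum_def basis_mat_def scalar_prod_def lessThan_atLeast0 mult.commute mult.left_commute)
  qed auto
qed

lemma outer_sum_mult: "\<Phi> f * \<Phi> g = \<Phi> (\<lambda>i. f i * g i)"
proof -
  let ?P = basis_mat
  have "\<Phi> f * \<Phi> g = ?P * mat_diag n f * (transpose_mat ?P * ?P) * mat_diag n g * transpose_mat ?P"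
    by (simp add: outer_sum_eq assoc_mult_mat[of _ n n _ n _ n] mult_carrier_mat[of _ n n _ n])
  also have "\<dots> = ?P * (mat_diag n f * mat_diag n g) * transpose_mat ?P"
    by (simp add: transpose_basis_mat_mult assoc_mult_mat[of _ n n _ n _ n] mult_carrier_mat[of _ n n _ n]
        left_mult_one_mat[of _ n n])
  finally show ?thesis
    by (simp add: outer_sum_eq)
qed

lemma outer_sum_one: "\<Phi> (\<lambda>_. 1) = 1\<^sub>m n"
  by (simp add: outer_sum_eq basis_mat_mult_transpose)

lemma outer_sum_zero: "\<Phi> (\<lambda>_. 0) = 0\<^sub>m n n"
  by (intro eq_matI) (simp_all add: outer_sum_def)

lemma outer_sum_uminus: "- \<Phi> f = \<Phi> (\<lambda>i. - f i)"
  by (intro eq_matI) (simp_all add: outer_sum_def sum_negf)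

lemma outer_sum_add: "\<Phi> f + \<Phi> g = \<Phi> (\<lambda>i. f i + g i)"
  by (intro eq_matI) (simp_all add: outer_sum_def sum.distrib algebra_simps)

lemma transpose_outer_sum: "transpose_mat (\<Phi> f) = \<Phi> f"
  by (intro eq_matI) (simp_all add: outer_sum_def mult.commute)

lemma outer_sum_cong: "(\<And>i. i < n \<Longrightarrow> f i = g i) \<Longrightarrow> \<Phi> f = \<Phi> g"
  unfolding outer_sum_def by (intro cong_mat refl) (auto intro!: sum.cong)

lemma spectral_decomposition:
  assumes L: "L \<in> carrier_mat n n" and eigen: "\<And>i. i < n \<Longrightarrow> L *\<^sub>v phi i = mu i \<cdot>\<^sub>v phi i"
  shows "L = \<Phi> mu"
proof -
  let ?P = basis_mat
  have LP: "L * ?P = ?P * mat_diag n mu"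
  proof (rule eq_matI)
    fix j i assume "j < dim_row (?P * mat_diag n mu)" "i < dim_col (?P * mat_diag n mu)"
    then have ji: "j < n" "i < n" by (simp_all add: mat_diag_def)
    have "(L * ?P) $$ (j, i) = (L *\<^sub>v phi i) $ j"
      using L ji by (simp add: col_basis_mat)
    also have "\<dots> = phi i $ j * mu i"
      using ji by (simp add: eigen)
    also have "\<dots> = (?P * mat_diag n mu) $$ (j, i)"
      using ji by (simp add: mat_diag_mult_right[of _ n] basis_mat_def)
    finally show "(L * ?P) $$ (j, i) = (?P * mat_diag n mu) $$ (j, i)" .
  qed (use L in \<open>simp_all add: mat_diag_def\<close>)
  have "L = L * (?P * transpose_mat ?P)"
    using L by (simp add: basis_mat_mult_transpose)
  also have "\<dots> = ?P * mat_diag n mu * transpose_mat ?P"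
    using L by (simp add: LP assoc_mult_mat[of _ n n _ n _ n, symmetric])
  finally show ?thesis
    by (simp add: outer_sum_eq)
qed

definition block_outer_sum ::
    "(nat \<Rightarrow> real) \<Rightarrow> (nat \<Rightarrow> real) \<Rightarrow> (nat \<Rightarrow> real) \<Rightarrow> (nat \<Rightarrow> real) \<Rightarrow> real mat" where
  "block_outer_sum f1 f2 f3 f4 = four_block_mat (\<Phi> f1) (\<Phi> f2) (\<Phi> f3) (\<Phi> f4)"

lemma block_outer_sum_carrier [simp]: "block_outer_sum f1 f2 f3 f4 \<in> carrier_mat (n + n) (n + n)"
  by (simp add: block_outer_sum_def)

lemma block_outer_sum_mult:
  "block_outer_sum f1 f2 f3 f4 * block_outer_sum g1 g2 g3 g4 =
   block_outer_sum (\<lambda>i. f1 i * g1 i + f2 i * g3 i) (\<lambda>i. f1 i * g2 i + f2 i * g4 i)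
     (\<lambda>i. f3 i * g1 i + f4 i * g3 i) (\<lambda>i. f3 i * g2 i + f4 i * g4 i)"
  unfolding block_outer_sum_def
  by (subst mult_four_block_mat[of _ n n _ n _ n _ _ n _ n]) (simp_all add: outer_sum_mult outer_sum_add)

lemma transpose_block_outer_sum:
  "transpose_mat (block_outer_sum f1 f2 f3 f4) = block_outer_sum f1 f3 f2 f4"
  unfolding block_outer_sum_def
  by (subst transpose_four_block_mat[of _ n n _ n _ n]) (simp_all add: transpose_outer_sum)

lemma block_outer_sum_cong:
  assumes "\<And>i. i < n \<Longrightarrow> f1 i = g1 i \<and> f2 i = g2 i \<and> f3 i = g3 i \<and> f4 i = g4 i"
  shows "block_outer_sum f1 f2 f3 f4 = block_outer_sum g1 g2 g3 g4"
  unfolding block_outer_sum_def using assms by (metis outer_sum_cong)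

lemma block_outer_sum_one: "block_outer_sum (\<lambda>_. 1) (\<lambda>_. 0) (\<lambda>_. 0) (\<lambda>_. 1) = 1\<^sub>m (n + n)"
  by (simp add: block_outer_sum_def outer_sum_one outer_sum_zero)

lemma polar_factor_block_outer_sum:
  assumes b_pos: "\<And>i. i < n \<Longrightarrow> b i > 0"
    and unit: "\<And>i. i < n \<Longrightarrow> (a i)\<^sup>2 + (b i)\<^sup>2 = 1"
    and rel: "\<And>i. i < n \<Longrightarrow> 2 * a i + b i * m i = 0"
  defines "G \<equiv> block_outer_sum (\<lambda>_. 0) (\<lambda>_. 1) (\<lambda>_. - 1) (\<lambda>i. - m i)"
  shows "G * mat_inv (pd_sqrt (transpose_mat G * G)) = block_outer_sum a b (\<lambda>i. - b i) a"
proof -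
  define c where "c i = b i - a i * m i" for i
  define s where "s i = sqrt (b i)" for i
  have s: "s i \<noteq> 0" "s i * s i = b i" if "i < n" for i
    using b_pos[OF that] unfolding s_def by (auto simp: real_sqrt_mult[symmetric])
  have det: "b i * c i - a i * a i = 1" if "i < n" for i
    using unit[OF that] rel[OF that] unfolding c_def power2_eq_square by Groebner_Basis.algebra
  have c_eq: "c i = (1 + a i * a i) / b i" if "i < n" for i
    using det[OF that] b_pos[OF that] by (simp add: field_simps)
  let ?S = "block_outer_sum b (\<lambda>i. - a i) (\<lambda>i. - a i) c"
  let ?V = "block_outer_sum c a a b"
  let ?R = "block_outer_sum s (\<lambda>i. - a i / s i) (\<lambda>_. 0) (\<lambda>i. 1 / s i)"
  let ?R' = "block_outer_sum (\<lambda>i. 1 / s i) (\<lambda>i. a i / s i) (\<lambda>_. 0) s"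
  txt \<open>\<open>?R\<close> is the blockwise Cholesky factor of \<open>?S\<close>, invertible with inverse \<open>?R'\<close>.\<close>
  have "?R' * ?R = 1\<^sub>m (n + n)"
    unfolding block_outer_sum_mult block_outer_sum_one[symmetric]
    by (rule block_outer_sum_cong) (simp add: s field_simps)
  moreover have "transpose_mat ?R * ?R = ?S"
    unfolding block_outer_sum_mult transpose_block_outer_sum
    by (rule block_outer_sum_cong) (simp add: s c_eq field_simps add_divide_distrib)
  ultimately have S_pos_def: "pos_def_mat (n + n) ?S"
    by (metis pos_def_mat_gram block_outer_sum_carrier)
  have GtG: "transpose_mat G * G = ?S * ?S"
    unfolding G_def block_outer_sum_mult transpose_block_outer_sum
  proof (rule block_outer_sum_cong, goal_cases)
    case (1 i)
    show ?case
      using unit[OF 1] rel[OF 1] unfolding c_def power2_eq_square by Groebner_Basis.algebra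
  qed
  have SV: "?S * ?V = 1\<^sub>m (n + n)"
    unfolding block_outer_sum_mult block_outer_sum_one[symmetric]
    by (rule block_outer_sum_cong) (simp add: det algebra_simps)
  have GV: "G * ?V = block_outer_sum a b (\<lambda>i. - b i) a"
    unfolding G_def block_outer_sum_mult
    by (rule block_outer_sum_cong) (use rel in \<open>auto simp: c_def algebra_simps\<close>)
  have "G \<in> carrier_mat (n + n) (n + n)" by (simp add: G_def)
  with polar_factor_eqI[OF _ S_pos_def GtG _ SV] GV show ?thesis by simp
qed

end

theorem proposition6:
  fixes n :: nat and A :: "real mat" and phi :: "nat \<Rightarrow> real vec" and mu :: "nat \<Rightarrow> real"
  assumes "n \<ge> 1"
    and "adjacency_matrix n A"
    and "graph_connected n A"
    and "\<forall>i<n. phi i \<in> carrier_vec n"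
    and "\<forall>i<n. \<forall>j<n. phi i \<bullet> phi j = (if i = j then 1 else 0)"
    and "\<forall>i<n. laplacian n A *\<^sub>v phi i = mu i \<cdot>\<^sub>v phi i"
  shows "let L = laplacian n A;
             G = four_block_mat (0\<^sub>m n n) (1\<^sub>m n) (- 1\<^sub>m n) (- L);
             U = G * mat_inv (pd_sqrt (transpose_mat G * G));
             lam = (\<lambda>i. (sqrt ((mu i)\<^sup>2 + 4) + mu i) / 2);
             \<A> = outer_sum n (\<lambda>i. (1 - (lam i)\<^sup>2) / (1 + (lam i)\<^sup>2)) phi;
             \<B> = outer_sum n (\<lambda>i. 2 * lam i / (1 + (lam i)\<^sup>2)) phi
         in U = four_block_mat \<A> \<B> (- \<B>) \<A>"
proof -
  interpret orthonormal_basis n phi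
    using assms(4,5) by unfold_locales auto
  let ?lam = "\<lambda>i. (sqrt ((mu i)\<^sup>2 + 4) + mu i) / 2"
  let ?a = "\<lambda>i. (1 - (?lam i)\<^sup>2) / (1 + (?lam i)\<^sup>2)"
  let ?b = "\<lambda>i. 2 * ?lam i / (1 + (?lam i)\<^sup>2)"
  note coeffs = unit_circle_param_coeffs[OF quadratic_root_pos quadratic_root_eq]
  have "laplacian n A \<in> carrier_mat n n"
    using assms(2) by (simp add: laplacian_def degree_matrix_def adjacency_matrix_def minus_carrier_mat)
  then have L: "laplacian n A = \<Phi> mu"
    using assms(6) by (intro spectral_decomposition) auto
  have "four_block_mat (0\<^sub>m n n) (1\<^sub>m n) (- 1\<^sub>m n) (- laplacian n A)
      = block_outer_sum (\<lambda>_. 0) (\<lambda>_. 1) (\<lambda>_. - 1) (\<lambda>i. - mu i)"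
    by (simp add: block_outer_sum_def L outer_sum_zero outer_sum_one outer_sum_uminus[symmetric])
  moreover have "four_block_mat (\<Phi> ?a) (\<Phi> ?b) (- \<Phi> ?b) (\<Phi> ?a) = block_outer_sum ?a ?b (\<lambda>i. - ?b i) ?a"
    by (simp add: block_outer_sum_def outer_sum_uminus)
  ultimately show ?thesis
    unfolding Let_def using polar_factor_block_outer_sum[OF coeffs] by simp
qed

end
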